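(* Consider the following MIMO flat-fading model. Fix integers $l_{\mathrm t},l_{\mathrm r},n\ge1$, a known pilot matrix $S=[s_{t,k}]\in\mathbb{C}^{n\times l_{\mathrm t}}$, channel prior $\vec{\mathbf h}\sim\mathcal{CN}(\vec\mu_{\vec{\mathbf h}},\Sigma_{\vec{\mathbf h}})$ with $\Sigma_{\vec{\mathbf h}}$ positive definite, frequency offset prior $\mathbf f_\delta\sim\mathcal N(\mu_{\mathbf f_\delta},\sigma^2_{\mathbf f_\delta})$, and i.i.d. $\mathcal{CN}(0,1)$ noise, mutually independent, with observations $y_{r,k}=e^{j2\pi\mathbf f_\delta(k-1)}\sum_t s_{t,k}h_{r,t}+n_{r,k}$. For a given observation $\vec y$ and $k=1,\dots,n-1$ define $$z_k=\sum_{r,t}s_{t,k+1}y_{r,k+1}^*b_{r,t}+\sum_{k_1=k+1}^{n}\sum_{r_1,t_1,r_2,t_2}a_{r_1,t_1,r_2,t_2}\,s_{t_1,k_1}s^*_{t_2,k_1-k}\,y_{r_2,k_1-k}\,y^*_{r_1,k_1},$$ and write $z_k=r_ke^{-j\theta_k}$ with $r_k\ge0$, $\theta_k\in\mathbb R$. Then $$\frac{\partial g(\vec y,f_\delta)}{\partial f_\delta}=-4\pi\,\mathrm{Im}\Big[\sum_{k=1}^{n-1}e^{j2\pi f_\delta k}\,k\,r_ke^{-j\theta_k}\Big]-\sigma_{\mathbf f_\delta}^{-2}(f_\delta-\mu_{\mathbf f_\delta})=-4\pi\sum_{k=1}^{n-1}k\,r_k\sin\!\Big(2\pi k\Big(f_\delta-\frac{\theta_k}{2\pi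 k}\Big)\Big)-\sigma_{\mathbf f_\delta}^{-2}(f_\delta-\mu_{\mathbf f_\delta}),$$ and the optimal solution $f_\delta$ of the MAP frequency offset estimation problem $\max_{f_\delta}f_{\vec{\mathbf y}|\mathbf f_\delta}(\vec y|f_\delta)f_{\mathbf f_\delta}(f_\delta)$ (equivalently $\max_{f_\delta}g(\vec y,f_\delta)$) satisfies $\frac{\partial g(\vec y,f_\delta)}{\partial f_\delta}=0$.
   Context: Sums over $r,r_1,r_2$ range over $1..l_{\mathrm r}$ and over $t,t_1,t_2$ over $1..l_{\mathrm t}$; ${}^*$ is complex conjugation. $\vec{\mathbf h}$ stacks $h_{r,t}$ in position $(r-1)l_{\mathrm t}+t$; $\vec y$ stacks $y_{r,k}$ in position $(r-1)n+k$. $F(f)=\mathrm{diag}(e^{j2\pi f(k-1)})_{k=1..n}$, $X(f)=F(f)S$, $\grave X(f)=I_{l_{\mathrm r}}\otimes X(f)$, $\grave S=I_{l_{\mathrm r}}\otimes S$. $A=(\grave S^\dagger\grave S+\Sigma_{\vec{\mathbf h}}^{-1})^{-1}$ with $a_{r_1,t_1,r_2,t_2}$ its entry in row $(r_1-1)l_{\mathrm t}+t_1$ and column $(r_2-1)l_{\mathrm t}+t_2$; $\vec b=(I-A\grave S^\dagger\grave S)\vec\mu_{\vec{\mathbf h}}$ with $b_{r,t}$ its entry in position $(r-1)l_{\mathrm t}+t$. $g(\vec y,f_\delta)=2\,\mathrm{Re}[\vec b^\dagger\grave X(f_\delta)^\dagger\vec y]+(\grave X(f_\delta)^\dagger\vec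 y)^\dagger A(\grave X(f_\delta)^\dagger\vec y)-\frac12\sigma_{\mathbf f_\delta}^{-2}|f_\delta-\mu_{\mathbf f_\delta}|^2$. *)

theory Defs
  imports "HOL-Analysis.Analysis"
begin

text \<open>Receive antennas r range over {1..lr}, transmit antennas t over {1..lt},
  time indices k over {1..n} (1-based, as in the paper). A channel vector h (stacked at
  position (r-1)lt+t in the paper) is represented as a function on index pairs (r,t) in
  the index set chan_idx lr lt; an (lr lt) x (lr lt) matrix is a function of two such pairs.
  The pilot matrix S is s t k (= entry s_{t,k}); the observation is y r k (= y_{r,k}).\<close>

definition chan_idx :: "nat \<Rightarrow> nat \<Rightarrow> (nat \<times> nat) set" where
  "chan_idx lr lt = {1..lr} \<times> {1..lt}"

definition herm_pos_def :: "'i set \<Rightarrow> ('i \<Rightarrow> 'i \<Rightarrow> complex) \<Rightarrow> bool" where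
  "herm_pos_def I M \<longleftrightarrow>
     (\<forall>p\<in>I. \<forall>q\<in>I. M p q = cnj (M q p)) \<and>
     (\<forall>v. (\<exists>p\<in>I. v p \<noteq> 0) \<longrightarrow> Re (\<Sum>p\<in>I. \<Sum>q\<in>I. cnj (v p) * M p q * v q) > 0)"

definition inv_on :: "'i set \<Rightarrow> ('i \<Rightarrow> 'i \<Rightarrow> complex) \<Rightarrow> ('i \<Rightarrow> 'i \<Rightarrow> complex)" where
  "inv_on I M = (THE B. (\<forall>p q. (p \<notin> I \<or> q \<notin> I) \<longrightarrow> B p q = 0) \<and>
       (\<forall>p\<in>I. \<forall>q\<in>I. (\<Sum>l\<in>I. M p l * B l q) = (if p = q then 1 else 0)) \<and>
       (\<forall>p\<in>I. \<forall>q\<in>I. (\<Sum>l\<in>I. B p l * M l q) = (if p = q then 1 else 0)))"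

text \<open>Gram matrix (I_lr \<otimes> S)^\<dagger> (I_lr \<otimes> S), entry at ((r1,t1),(r2,t2)).\<close>
definition gramS :: "nat \<Rightarrow> (nat \<Rightarrow> nat \<Rightarrow> complex) \<Rightarrow> nat \<times> nat \<Rightarrow> nat \<times> nat \<Rightarrow> complex" where
  "gramS n s p q = (if fst p = fst q then (\<Sum>k=1..n. cnj (s (snd p) k) * s (snd q) k) else 0)"

definition Amat :: "nat \<Rightarrow> nat \<Rightarrow> nat \<Rightarrow> (nat \<Rightarrow> nat \<Rightarrow> complex)
    \<Rightarrow> (nat \<times> nat \<Rightarrow> nat \<times> nat \<Rightarrow> complex) \<Rightarrow> nat \<times> nat \<Rightarrow> nat \<times> nat \<Rightarrow> complex" where
  "Amat lr lt n s Sig = inv_on (chan_idx lr lt)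
      (\<lambda>p q. gramS n s p q + inv_on (chan_idx lr lt) Sig p q)"

definition bvec :: "nat \<Rightarrow> nat \<Rightarrow> nat \<Rightarrow> (nat \<Rightarrow> nat \<Rightarrow> complex)
    \<Rightarrow> (nat \<times> nat \<Rightarrow> nat \<times> nat \<Rightarrow> complex) \<Rightarrow> (nat \<times> nat \<Rightarrow> complex) \<Rightarrow> nat \<times> nat \<Rightarrow> complex" where
  "bvec lr lt n s Sig mu p = (\<Sum>q\<in>chan_idx lr lt.
      ((if p = q then 1 else 0) - (\<Sum>l\<in>chan_idx lr lt. Amat lr lt n s Sig p l * gramS n s l q)) * mu q)"

text \<open>(I_lr \<otimes> X(f))^\<dagger> y, entry at (r,t), where X(f) = F(f) S.\<close>
definition Xhy :: "nat \<Rightarrow> (nat \<Rightarrow> nat \<Rightarrow> complex) \<Rightarrow> (nat \<Rightarrow> nat \<Rightarrow> complex) \<Rightarrow> real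
    \<Rightarrow> nat \<times> nat \<Rightarrow> complex" where
  "Xhy n s y f p = (\<Sum>k=1..n. cnj (exp (\<i> * complex_of_real (2 * pi * f * real (k - 1))) * s (snd p) k)
                             * y (fst p) k)"

text \<open>The objective g(y,f). The quadratic form term is real (A is Hermitian); we take its real
  part so that g is real-valued. sf2 is the prior variance \<sigma>^2 of the frequency offset.\<close>
definition gfun :: "nat \<Rightarrow> nat \<Rightarrow> nat \<Rightarrow> (nat \<Rightarrow> nat \<Rightarrow> complex)
    \<Rightarrow> (nat \<times> nat \<Rightarrow> nat \<times> nat \<Rightarrow> complex) \<Rightarrow> (nat \<times> nat \<Rightarrow> complex) \<Rightarrow> real \<Rightarrow> real
    \<Rightarrow> (nat \<Rightarrow> nat \<Rightarrow> complex) \<Rightarrow> real \<Rightarrow> real" where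
  "gfun lr lt n s Sig mu muf sf2 y f =
     2 * Re (\<Sum>p\<in>chan_idx lr lt. cnj (bvec lr lt n s Sig mu p) * Xhy n s y f p)
   + Re (\<Sum>p\<in>chan_idx lr lt. \<Sum>q\<in>chan_idx lr lt.
           cnj (Xhy n s y f p) * Amat lr lt n s Sig p q * Xhy n s y f q)
   - 1/2 * (1 / sf2) * \<bar>f - muf\<bar>^2"

definition zcoef :: "nat \<Rightarrow> nat \<Rightarrow> nat \<Rightarrow> (nat \<Rightarrow> nat \<Rightarrow> complex)
    \<Rightarrow> (nat \<times> nat \<Rightarrow> nat \<times> nat \<Rightarrow> complex) \<Rightarrow> (nat \<times> nat \<Rightarrow> complex)
    \<Rightarrow> (nat \<Rightarrow> nat \<Rightarrow> complex) \<Rightarrow> nat \<Rightarrow> complex" where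
  "zcoef lr lt n s Sig mu y k =
     (\<Sum>p\<in>chan_idx lr lt. s (snd p) (k + 1) * cnj (y (fst p) (k + 1)) * bvec lr lt n s Sig mu p)
   + (\<Sum>k1=k+1..n. \<Sum>p\<in>chan_idx lr lt. \<Sum>q\<in>chan_idx lr lt.
        Amat lr lt n s Sig p q * s (snd p) k1 * cnj (s (snd q) (k1 - k))
        * y (fst q) (k1 - k) * cnj (y (fst p) k1))"

end

theory Submission
  imports Defs "Jordan_Normal_Form.Determinant"
begin

text \<open>Expanding \<open>X(f)\<^sup>\<dagger> y\<close>, the objective \<open>g(y, f)\<close> becomes a trigonometric polynomial in \<open>f\<close>
  plus the Gaussian prior term: the linear part has frequencies \<open>k - 1\<close> (coefficients
  \<open>lin_coef\<close>), the quadratic part frequencies \<open>k\<^sub>1 - k\<^sub>2\<close> (coefficients \<open>quad_coef\<close>).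
  Differentiating term by term, the contributions of the frequencies \<open>k\<close> and \<open>-k\<close> coincide
  because \<open>A\<close> is Hermitian, so the quadratic part collapses to a sum over the diagonals
  \<open>k\<^sub>1 - k\<^sub>2 = k > 0\<close>, which together with the shifted linear part gives \<open>z\<^sub>k\<close>.
  As \<open>inv_on\<close> is a definite description, the Hermitian symmetry of \<open>A = (G + \<Sigma>\<inverse>)\<inverse>\<close> needs
  both inverses to exist: \<open>\<Sigma>\<inverse>\<close> is positive definite with \<open>\<Sigma>\<close>, and adding the positive
  semidefinite Gram matrix \<open>G\<close> keeps it so.\<close>

definition hermitian_on :: "'i set \<Rightarrow> ('i \<Rightarrow> 'i \<Rightarrow> complex) \<Rightarrow> bool" where
  "hermitian_on I M \<longleftrightarrow> (\<forall>p\<in>I. \<forall>q\<in>I. M p q = cnj (M q p))"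

definition quad_form :: "'i set \<Rightarrow> ('i \<Rightarrow> 'i \<Rightarrow> complex) \<Rightarrow> ('i \<Rightarrow> complex) \<Rightarrow> complex" where
  "quad_form I M v = (\<Sum>p\<in>I. \<Sum>q\<in>I. cnj (v p) * M p q * v q)"

lemma herm_pos_def_iff:
  "herm_pos_def I M \<longleftrightarrow>
     hermitian_on I M \<and> (\<forall>v. (\<exists>p\<in>I. v p \<noteq> 0) \<longrightarrow> Re (quad_form I M v) > 0)"
  unfolding herm_pos_def_def hermitian_on_def quad_form_def ..

lemma quad_form_eq_sum_mult:
  "quad_form I M v = (\<Sum>p\<in>I. cnj (v p) * (\<Sum>q\<in>I. M p q * v q))"
  unfolding quad_form_def sum_distrib_left mult.assoc ..

definition is_inverse_on :: "'i set \<Rightarrow> ('i \<Rightarrow> 'i \<Rightarrow> complex) \<Rightarrow> ('i \<Rightarrow> 'i \<Rightarrow> complex) \<Rightarrow> bool" where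
  "is_inverse_on I M B \<longleftrightarrow> (\<forall>p q. (p \<notin> I \<or> q \<notin> I) \<longrightarrow> B p q = 0) \<and>
       (\<forall>p\<in>I. \<forall>q\<in>I. (\<Sum>l\<in>I. M p l * B l q) = (if p = q then 1 else 0)) \<and>
       (\<forall>p\<in>I. \<forall>q\<in>I. (\<Sum>l\<in>I. B p l * M l q) = (if p = q then 1 else 0))"

lemma inv_on_eq_The: "inv_on I M = (THE B. is_inverse_on I M B)"
  unfolding inv_on_def is_inverse_on_def ..

lemma is_inverse_on_unique:
  assumes "finite I" and B: "is_inverse_on I M B" and C: "is_inverse_on I M C"
  shows "B = C"
proof (intro ext)
  fix p q
  show "B p q = C p q"
  proof (cases "p \<in> I \<and> q \<in> I")
    case False
    then show ?thesis using B C unfolding is_inverse_on_def by auto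
  next
    case True
    have "B p q = (\<Sum>l\<in>I. if p = l then B l q else 0)"
      using True \<open>finite I\<close> by simp
    also have "\<dots> = (\<Sum>l\<in>I. (\<Sum>m\<in>I. C p m * M m l) * B l q)"
      using C True unfolding is_inverse_on_def by (intro sum.cong) auto
    also have "\<dots> = (\<Sum>m\<in>I. C p m * (\<Sum>l\<in>I. M m l * B l q))"
      unfolding sum_distrib_left sum_distrib_right mult.assoc by (rule sum.swap)
    also have "\<dots> = (\<Sum>m\<in>I. C p m * (if m = q then 1 else 0))"
      using B True unfolding is_inverse_on_def by (intro sum.cong) auto
    also have "\<dots> = C p q"
      using True \<open>finite I\<close> by (simp add: if_distrib sum.delta cong: if_cong)
    finally show ?thesis .
  qed
qed

lemma is_inverse_on_adjoint:
  assumes "hermitian_on I M" and "is_inverse_on I M B"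
  shows "is_inverse_on I M (\<lambda>p q. cnj (B q p))"
proof -
  have "(\<Sum>l\<in>I. M p l * cnj (B q l)) = cnj (\<Sum>l\<in>I. B q l * M l p)"
    and "(\<Sum>l\<in>I. cnj (B l p) * M l q) = cnj (\<Sum>l\<in>I. M q l * B l p)"
    if "p \<in> I" "q \<in> I" for p q
  proof -
    have "M p l = cnj (M l p)" "cnj (M q l) = M l q" if "l \<in> I" for l
      using assms(1) \<open>p \<in> I\<close> \<open>q \<in> I\<close> that unfolding hermitian_on_def
      by (metis complex_cnj_cnj)+
    then show "(\<Sum>l\<in>I. M p l * cnj (B q l)) = cnj (\<Sum>l\<in>I. B q l * M l p)"
      and "(\<Sum>l\<in>I. cnj (B l p) * M l q) = cnj (\<Sum>l\<in>I. M q l * B l p)"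
      unfolding cnj_sum by (simp_all add: mult.commute cong: sum.cong)
  qed
  then show ?thesis
    using assms(2) unfolding is_inverse_on_def by auto
qed

lemma det_reindexed_mat_neq_0:
  fixes M :: "'i \<Rightarrow> 'i \<Rightarrow> 'a::idom"
  assumes h: "bij_betw h {0..<N} I"
    and inj: "\<And>v. \<forall>p\<in>I. (\<Sum>q\<in>I. M p q * v q) = 0 \<Longrightarrow> \<forall>p\<in>I. v p = 0"
  shows "det (mat N N (\<lambda>(i, j). M (h i) (h j))) \<noteq> 0" (is "det ?M \<noteq> 0")
proof
  define g where "g = inv_into {0..<N} h"
  have gN: "g p < N" and hg: "h (g p) = p" if "p \<in> I" for p
    using that bij_betw_apply[OF bij_betw_inv_into[OF h]] bij_betw_inv_into_right[OF h]
    unfolding g_def by auto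
  have gh: "g (h i) = i" if "i < N" for i
    using that bij_betw_inv_into_left[OF h] unfolding g_def by simp
  assume "det ?M = 0"
  then obtain v where v: "v \<in> carrier_vec N" "v \<noteq> 0\<^sub>v N" "?M *\<^sub>v v = 0\<^sub>v N"
    using det_0_iff_vec_prod_zero[of ?M N] by auto
  have "(\<Sum>q\<in>I. M p q * v $ g q) = (?M *\<^sub>v v) $ g p" if "p \<in> I" for p
    using v(1) that gN
    by (auto simp: sum.reindex_bij_betw[OF h, symmetric] scalar_prod_def hg gh intro!: sum.cong)
  then have "\<forall>p\<in>I. (\<Sum>q\<in>I. M p q * v $ g q) = 0"
    using v(3) gN by simp
  then have "\<forall>p\<in>I. v $ g p = 0"
    by (rule inj)
  then have "v = 0\<^sub>v N"
    using v(1) gh bij_betw_apply[OF h] by (intro eq_vecI) fastforce+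
  then show False
    using v(2) by contradiction
qed

lemma ex_inverse_on_if_injective:
  assumes "finite I"
    and inj: "\<And>v. \<forall>p\<in>I. (\<Sum>q\<in>I. M p q * v q) = 0 \<Longrightarrow> \<forall>p\<in>I. v p = 0"
  shows "\<exists>B. is_inverse_on I M B"
proof -
  define N where "N = card I"
  obtain h where h: "bij_betw h {0..<N} I"
    using ex_bij_betw_nat_finite[OF \<open>finite I\<close>] N_def by auto
  define g where "g = inv_into {0..<N} h"
  have gN: "g p < N" and hg: "h (g p) = p" if "p \<in> I" for p
    using that bij_betw_apply[OF bij_betw_inv_into[OF h]] bij_betw_inv_into_right[OF h]
    unfolding g_def by auto
  have gh: "g (h i) = i" if "i < N" for i
    using that bij_betw_inv_into_left[OF h] unfolding g_def by simp
  define Mm where "Mm = mat N N (\<lambda>(i, j). M (h i) (h j))"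
  have Mm: "Mm \<in> carrier_mat N N"
    unfolding Mm_def by simp
  have "det Mm \<noteq> 0"
    unfolding Mm_def using h inj by (rule det_reindexed_mat_neq_0)
  then obtain Q where Q: "Q \<in> carrier_mat N N" "Q * Mm = 1\<^sub>m N" "Mm * Q = 1\<^sub>m N"
    using det_non_zero_imp_unit[OF Mm] unfolding Units_def ring_mat_def by auto
  define B where "B p q = (if p \<in> I \<and> q \<in> I then Q $$ (g p, g q) else 0)" for p q
  have "(\<Sum>l\<in>I. M p l * B l q) = (Mm * Q) $$ (g p, g q)"
    and "(\<Sum>l\<in>I. B p l * M l q) = (Q * Mm) $$ (g p, g q)"
    if "p \<in> I" "q \<in> I" for p q
    using that Q(1) gN bij_betw_apply[OF h]
    by (auto simp: sum.reindex_bij_betw[OF h, symmetric] B_def Mm_def scalar_prod_def hg gh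
        intro!: sum.cong)
  moreover have "g p = g q \<longleftrightarrow> p = q" if "p \<in> I" "q \<in> I" for p q
    using that hg by metis
  ultimately have "is_inverse_on I M B"
    using Q gN unfolding is_inverse_on_def B_def by auto
  then show ?thesis by blast
qed

lemma herm_pos_def_injective:
  assumes "herm_pos_def I M" and "\<forall>p\<in>I. (\<Sum>q\<in>I. M p q * v q) = 0"
  shows "\<forall>p\<in>I. v p = 0"
proof -
  have "quad_form I M v = 0"
    using assms(2) unfolding quad_form_eq_sum_mult by simp
  then show ?thesis
    using assms(1) unfolding herm_pos_def_iff by fastforce
qed

lemma is_inverse_on_inv_on:
  assumes "finite I" and "herm_pos_def I M"
  shows "is_inverse_on I M (inv_on I M)"
proof -
  have "\<exists>!B. is_inverse_on I M B"
    using ex_inverse_on_if_injective[OF assms(1) herm_pos_def_injective[OF assms(2)]]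
      is_inverse_on_unique[OF assms(1)] by blast
  then show ?thesis
    unfolding inv_on_eq_The by (rule theI')
qed

lemma hermitian_on_inverse:
  assumes "finite I" and "hermitian_on I M" and B: "is_inverse_on I M B"
  shows "hermitian_on I B"
proof -
  have "(\<lambda>p q. cnj (B q p)) = B"
    using is_inverse_on_unique[OF assms(1) is_inverse_on_adjoint[OF assms(2) B] B] .
  then show ?thesis
    unfolding hermitian_on_def by metis
qed

lemma is_inverse_on_apply:
  assumes "finite I" and B: "is_inverse_on I M B" and "p \<in> I"
  shows "(\<Sum>l\<in>I. M p l * (\<Sum>q\<in>I. B l q * v q)) = v p"
proof -
  have "(\<Sum>l\<in>I. M p l * (\<Sum>q\<in>I. B l q * v q)) = (\<Sum>q\<in>I. (\<Sum>l\<in>I. M p l * B l q) * v q)"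
    unfolding sum_distrib_left sum_distrib_right mult.assoc by (rule sum.swap)
  also have "\<dots> = (\<Sum>q\<in>I. if p = q then v q else 0)"
    using B \<open>p \<in> I\<close> unfolding is_inverse_on_def by (intro sum.cong) auto
  finally show ?thesis
    using \<open>finite I\<close> \<open>p \<in> I\<close> by simp
qed

lemma quad_form_inverse:
  assumes "finite I" and herm: "hermitian_on I M" and B: "is_inverse_on I M B"
  shows "quad_form I B v = quad_form I M (\<lambda>p. \<Sum>q\<in>I. B p q * v q)"
proof -
  define w where "w p = (\<Sum>q\<in>I. B p q * v q)" for p
  have "cnj (v p) = (\<Sum>l\<in>I. cnj (w l) * M l p)" if "p \<in> I" for p
  proof -
    have "cnj (M p l) = M l p" if "l \<in> I" for l
      using herm \<open>p \<in> I\<close> that unfolding hermitian_on_def by (metis complex_cnj_cnj)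
    then show ?thesis
      unfolding is_inverse_on_apply[OF assms(1) B that, of v, symmetric, folded w_def] cnj_sum
      by (simp add: mult.commute cong: sum.cong)
  qed
  then have "quad_form I B v = (\<Sum>p\<in>I. \<Sum>l\<in>I. cnj (w l) * M l p * w p)"
    unfolding quad_form_eq_sum_mult w_def[symmetric] by (simp add: sum_distrib_right)
  also have "\<dots> = quad_form I M w"
    unfolding quad_form_def by (rule sum.swap)
  finally show ?thesis
    unfolding w_def .
qed

lemma herm_pos_def_inv_on:
  assumes "finite I" and pd: "herm_pos_def I M"
  shows "herm_pos_def I (inv_on I M)"
proof -
  define B where "B = inv_on I M"
  have B: "is_inverse_on I M B"
    unfolding B_def using assms by (rule is_inverse_on_inv_on)
  have herm: "hermitian_on I M"
    using pd unfolding herm_pos_def_iff by blast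
  have "Re (quad_form I B v) > 0" if nz: "\<exists>p\<in>I. v p \<noteq> 0" for v
  proof -
    have "\<exists>p\<in>I. (\<Sum>q\<in>I. B p q * v q) \<noteq> 0"
    proof (rule ccontr)
      assume "\<not> ?thesis"
      then have "\<forall>p\<in>I. v p = 0"
        using is_inverse_on_apply[OF assms(1) B, of _ v] by simp
      then show False
        using nz by blast
    qed
    then show ?thesis
      using pd quad_form_inverse[OF assms(1) herm B] unfolding herm_pos_def_iff by simp
  qed
  then show ?thesis
    using hermitian_on_inverse[OF assms(1) herm B] unfolding herm_pos_def_iff B_def by blast
qed

lemma herm_pos_def_add_psd:
  assumes S: "herm_pos_def I S" and G: "hermitian_on I G" and G_psd: "\<And>v. Re (quad_form I G v) \<ge> 0"
  shows "herm_pos_def I (\<lambda>p q. G p q + S p q)"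
  unfolding herm_pos_def_iff
proof (intro conjI allI impI)
  show "hermitian_on I (\<lambda>p q. G p q + S p q)"
    using S G unfolding herm_pos_def_iff hermitian_on_def by (metis complex_cnj_add)
  fix v :: "'a \<Rightarrow> complex" assume "\<exists>p\<in>I. v p \<noteq> 0"
  then have "Re (quad_form I S v) > 0"
    using S unfolding herm_pos_def_iff by blast
  moreover have "quad_form I (\<lambda>p q. G p q + S p q) v = quad_form I G v + quad_form I S v"
    unfolding quad_form_def by (simp add: distrib_left distrib_right sum.distrib)
  ultimately show "Re (quad_form I (\<lambda>p q. G p q + S p q) v) > 0"
    using G_psd[of v] by simp
qed

lemma quad_form_cong:
  assumes "\<And>p q. p \<in> I \<Longrightarrow> q \<in> I \<Longrightarrow> M p q = M' p q"
  shows "quad_form I M v = quad_form I M' v"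
  unfolding quad_form_def using assms by (auto intro!: sum.cong)

lemma quad_form_gram_nonneg:
  "Re (quad_form I (\<lambda>p q. \<Sum>j\<in>J. cnj (F p j) * F q j) v) \<ge> 0"
proof -
  define u where "u j = (\<Sum>q\<in>I. F q j * v q)" for j
  have "quad_form I (\<lambda>p q. \<Sum>j\<in>J. cnj (F p j) * F q j) v
      = (\<Sum>p\<in>I. \<Sum>q\<in>I. \<Sum>j\<in>J. cnj (F p j * v p) * (F q j * v q))"
    unfolding quad_form_def by (simp add: sum_distrib_left sum_distrib_right mult_ac)
  also have "\<dots> = (\<Sum>j\<in>J. \<Sum>p\<in>I. \<Sum>q\<in>I. cnj (F p j * v p) * (F q j * v q))"
    by (subst sum.swap) (rule sum.cong[OF refl], rule sum.swap)
  also have "\<dots> = (\<Sum>j\<in>J. cnj (u j) * u j)"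
    unfolding u_def cnj_sum sum_product ..
  finally show ?thesis
    by (simp add: sum_nonneg)
qed

lemma gramS_eq_gram:
  assumes "p \<in> chan_idx lr lt"
  shows "gramS n s p q = (\<Sum>j\<in>{1..lr} \<times> {1..n}.
            cnj (if fst p = fst j then s (snd p) (snd j) else 0) * (if fst q = fst j then s (snd q) (snd j) else 0))"
proof -
  have "(\<Sum>j\<in>{1..lr} \<times> {1..n}.
            cnj (if fst p = fst j then s (snd p) (snd j) else 0) * (if fst q = fst j then s (snd q) (snd j) else 0))
      = (\<Sum>r\<in>{1..lr}. if r = fst p then gramS n s p q else 0)"
    unfolding sum.cartesian_product' gramS_def by (intro sum.cong) auto
  also have "\<dots> = gramS n s p q"
    using assms unfolding chan_idx_def by auto
  finally show ?thesis ..
qed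

lemma herm_pos_def_gramS_add_inv_on:
  assumes "herm_pos_def (chan_idx lr lt) Sig"
  shows "herm_pos_def (chan_idx lr lt) (\<lambda>p q. gramS n s p q + inv_on (chan_idx lr lt) Sig p q)"
proof (rule herm_pos_def_add_psd)
  show "herm_pos_def (chan_idx lr lt) (inv_on (chan_idx lr lt) Sig)"
    using assms by (intro herm_pos_def_inv_on) (simp_all add: chan_idx_def)
  show "hermitian_on (chan_idx lr lt) (gramS n s)"
    unfolding hermitian_on_def gramS_def by (auto simp: mult.commute)
  define F where "F p j = (if fst p = fst j then s (snd p) (snd j) else 0)" for p :: "nat \<times> nat" and j
  show "Re (quad_form (chan_idx lr lt) (gramS n s) v) \<ge> 0" for v
  proof -
    have "quad_form (chan_idx lr lt) (gramS n s) v
        = quad_form (chan_idx lr lt) (\<lambda>p q. \<Sum>j\<in>{1..lr} \<times> {1..n}. cnj (F p j) * F q j) v"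
      by (rule quad_form_cong) (simp add: gramS_eq_gram F_def)
    moreover have "Re (quad_form (chan_idx lr lt) (\<lambda>p q. \<Sum>j\<in>{1..lr} \<times> {1..n}. cnj (F p j) * F q j) v) \<ge> 0"
      by (rule quad_form_gram_nonneg)
    ultimately show ?thesis
      by (simp only:)
  qed
qed

lemma hermitian_on_Amat:
  assumes "herm_pos_def (chan_idx lr lt) Sig"
  shows "hermitian_on (chan_idx lr lt) (Amat lr lt n s Sig)"
  using herm_pos_def_inv_on[OF _ herm_pos_def_gramS_add_inv_on[OF assms]]
  unfolding Amat_def herm_pos_def_iff chan_idx_def by simp

lemma has_real_derivative_Re_exp_sum:
  "((\<lambda>x. Re (\<Sum>j\<in>J. c j * exp (\<i> * of_real (w j * x)))) has_real_derivative
      - (\<Sum>j\<in>J. w j * Im (c j * exp (\<i> * of_real (w j * x))))) (at x)"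
proof -
  have "((\<lambda>x. Re (c j * exp (\<i> * of_real (w j * x)))) has_real_derivative
           - (w j * Im (c j * exp (\<i> * of_real (w j * x))))) (at x)" for j
  proof -
    have "Re (c j * exp (\<i> * of_real (w j * x))) = Re (c j) * cos (w j * x) - Im (c j) * sin (w j * x)" for x
      unfolding cis_conv_exp[symmetric] by simp
    moreover have "((\<lambda>x. Re (c j) * cos (w j * x) - Im (c j) * sin (w j * x)) has_real_derivative
           - (w j * Im (c j * exp (\<i> * of_real (w j * x))))) (at x)"
      unfolding cis_conv_exp[symmetric]
      by (auto intro!: derivative_eq_intros simp: algebra_simps)
    ultimately show ?thesis by simp
  qed
  then show ?thesis
    unfolding Re_sum sum_negf[symmetric] by (rule DERIV_sum)
qed

lemma sum_square_by_diagonals: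
  fixes F :: "nat \<Rightarrow> nat \<Rightarrow> 'a::comm_semiring_1"
  assumes sym: "\<And>a b. F a b = F b a" and diag: "\<And>a. F a a = 0"
  shows "(\<Sum>a=1..n. \<Sum>b=1..n. F a b) = 2 * (\<Sum>k=1..n-1. \<Sum>a=k+1..n. F a (a - k))"
proof (induction n)
  case 0
  then show ?case by simp
next
  case (Suc n)
  have "(\<Sum>a=1..Suc n. \<Sum>b=1..Suc n. F a b) = (\<Sum>a=1..n. \<Sum>b=1..n. F a b) + 2 * (\<Sum>b=1..n. F (Suc n) b)"
    by (simp add: sum.distrib diag sym[of _ "Suc n"] mult_2 add_ac)
  moreover have "(\<Sum>k=1..n. \<Sum>a=k+1..Suc n. F a (a - k))
      = (\<Sum>k=1..n-1. \<Sum>a=k+1..n. F a (a - k)) + (\<Sum>b=1..n. F (Suc n) b)"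
  proof -
    have "(\<Sum>k=1..n. \<Sum>a=k+1..Suc n. F a (a - k))
        = (\<Sum>k=1..n. \<Sum>a=k+1..n. F a (a - k)) + (\<Sum>k=1..n. F (Suc n) (Suc n - k))"
      by (simp add: sum.distrib)
    also have "(\<Sum>k=1..n. \<Sum>a=k+1..n. F a (a - k)) = (\<Sum>k=1..n-1. \<Sum>a=k+1..n. F a (a - k))"
      by (cases n) simp_all
    also have "(\<Sum>k=1..n. F (Suc n) (Suc n - k)) = (\<Sum>b=1..n. F (Suc n) b)"
      by (subst sum.atLeastAtMost_rev) (intro sum.cong refl, simp)
    finally show ?thesis .
  qed
  ultimately show ?case using Suc.IH by (simp add: distrib_left)
qed

lemma sum_linear_frequencies:
  fixes L :: "nat \<Rightarrow> complex"
  shows "(\<Sum>k=1..n. 2 * pi * real (k - 1) * Im (2 * L k * exp (\<i> * of_real (2 * pi * real (k - 1) * f))))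
    = 4 * pi * (\<Sum>k=1..n-1. Im (exp (\<i> * of_real (2 * pi * f * real k)) * of_nat k * L (k + 1)))"
proof (cases n)
  case 0
  then show ?thesis by simp
next
  case (Suc m)
  define G where "G k = 2 * pi * real (k - 1) * Im (2 * L k * exp (\<i> * of_real (2 * pi * real (k - 1) * f)))"
    for k
  have "(\<Sum>k=1..n. G k) = (\<Sum>k=0..m. G (Suc k))"
    unfolding Suc One_nat_def by (rule sum.shift_bounds_cl_Suc_ivl)
  also have "\<dots> = (\<Sum>k=1..m. G (Suc k))"
    by (simp add: sum.atLeast_Suc_atMost G_def)
  finally show ?thesis
    using Suc by (simp add: G_def sum_distrib_left algebra_simps)
qed

lemma sum_difference_frequencies:
  fixes C :: "nat \<Rightarrow> nat \<Rightarrow> complex"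
  assumes herm: "\<And>a b. C b a = cnj (C a b)"
  shows "(\<Sum>a=1..n. \<Sum>b=1..n. 2 * pi * (real a - real b)
            * Im (C a b * exp (\<i> * of_real (2 * pi * (real a - real b) * f))))
    = 4 * pi * (\<Sum>k=1..n-1. Im (exp (\<i> * of_real (2 * pi * f * real k)) * of_nat k * (\<Sum>a=k+1..n. C a (a - k))))"
proof -
  define F where "F a b = 2 * pi * (real a - real b) * Im (C a b * exp (\<i> * of_real (2 * pi * (real a - real b) * f)))"
    for a b
  have "F a b = F b a" for a b
  proof -
    have "C b a * exp (\<i> * of_real (2 * pi * (real b - real a) * f))
        = cnj (C a b * exp (\<i> * of_real (2 * pi * (real a - real b) * f)))"
      unfolding herm[of a b] cis_conv_exp[symmetric] by (simp add: cis_cnj algebra_simps)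
    then show ?thesis
      unfolding F_def by (simp add: algebra_simps)
  qed
  then have "(\<Sum>a=1..n. \<Sum>b=1..n. F a b) = 2 * (\<Sum>k=1..n-1. \<Sum>a=k+1..n. F a (a - k))"
    by (rule sum_square_by_diagonals) (simp add: F_def)
  also have "\<dots> = 4 * pi * (\<Sum>k=1..n-1. \<Sum>a=k+1..n. Im (exp (\<i> * of_real (2 * pi * f * real k)) * of_nat k * C a (a - k)))"
    unfolding F_def sum_distrib_left
    by (intro sum.cong refl) (auto simp: of_nat_diff algebra_simps)
  finally show ?thesis
    unfolding F_def by (simp add: Im_sum sum_distrib_left)
qed

definition lin_coef :: "(nat \<times> nat) set \<Rightarrow> (nat \<times> nat \<Rightarrow> complex)
    \<Rightarrow> (nat \<Rightarrow> nat \<Rightarrow> complex) \<Rightarrow> (nat \<Rightarrow> nat \<Rightarrow> complex) \<Rightarrow> nat \<Rightarrow> complex" where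
  "lin_coef I b s y k = (\<Sum>p\<in>I. b p * s (snd p) k * cnj (y (fst p) k))"

definition quad_coef :: "(nat \<times> nat) set \<Rightarrow> (nat \<times> nat \<Rightarrow> nat \<times> nat \<Rightarrow> complex)
    \<Rightarrow> (nat \<Rightarrow> nat \<Rightarrow> complex) \<Rightarrow> (nat \<Rightarrow> nat \<Rightarrow> complex) \<Rightarrow> nat \<Rightarrow> nat \<Rightarrow> complex" where
  "quad_coef I A s y k1 k2 = (\<Sum>p\<in>I. \<Sum>q\<in>I.
      A p q * s (snd p) k1 * cnj (s (snd q) k2) * y (fst q) k2 * cnj (y (fst p) k1))"

lemma linear_term_expansion:
  "Re (\<Sum>p\<in>I. cnj (b p) * Xhy n s y f p)
    = Re (\<Sum>k=1..n. lin_coef I b s y k * exp (\<i> * of_real (2 * pi * real (k - 1) * f)))"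
proof -
  have "cnj (\<Sum>p\<in>I. cnj (b p) * Xhy n s y f p)
      = (\<Sum>k=1..n. lin_coef I b s y k * exp (\<i> * of_real (2 * pi * real (k - 1) * f)))"
    unfolding Xhy_def lin_coef_def cnj_sum sum_distrib_left sum_distrib_right
    by (subst sum.swap) (simp add: ac_simps)
  from arg_cong[where f = Re, OF this] show ?thesis
    by simp
qed

lemma sum_mult_sum:
  fixes c :: "'a::comm_semiring_0"
  shows "(\<Sum>i\<in>A. f i) * c * (\<Sum>j\<in>B. g j) = (\<Sum>i\<in>A. \<Sum>j\<in>B. f i * c * g j)"
  by (simp add: sum_distrib_right) (simp add: sum_distrib_left)

lemma sum_swap_outer_pair:
  "(\<Sum>p\<in>P. \<Sum>q\<in>Q. \<Sum>i\<in>K. \<Sum>j\<in>L. f p q i j) = (\<Sum>i\<in>K. \<Sum>j\<in>L. \<Sum>p\<in>P. \<Sum>q\<in>Q. f p q i j)"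
proof -
  have "(\<Sum>p\<in>P. \<Sum>q\<in>Q. \<Sum>i\<in>K. \<Sum>j\<in>L. f p q i j) = (\<Sum>i\<in>K. \<Sum>p\<in>P. \<Sum>q\<in>Q. \<Sum>j\<in>L. f p q i j)"
    by (subst sum.swap) (rule sum.cong[OF refl], rule sum.swap)
  also have "\<dots> = (\<Sum>i\<in>K. \<Sum>j\<in>L. \<Sum>p\<in>P. \<Sum>q\<in>Q. f p q i j)"
    by (rule sum.cong[OF refl], subst sum.swap) (rule sum.cong[OF refl], rule sum.swap)
  finally show ?thesis .
qed

lemma quadratic_term_expansion:
  "(\<Sum>p\<in>I. \<Sum>q\<in>I. cnj (Xhy n s y f p) * A p q * Xhy n s y f q)
    = (\<Sum>k1=1..n. \<Sum>k2=1..n.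
         quad_coef I A s y k1 k2 * exp (\<i> * of_real (2 * pi * (real k1 - real k2) * f)))"
proof -
  define E where "E k = exp (\<i> * of_real (2 * pi * f * real (k - 1)))" for k :: nat
  have cnj_X: "cnj (Xhy n s y f p) = (\<Sum>k=1..n. E k * s (snd p) k * cnj (y (fst p) k))" for p
    by (simp add: Xhy_def E_def cnj_sum)
  have X: "Xhy n s y f q = (\<Sum>k=1..n. cnj (E k) * cnj (s (snd q) k) * y (fst q) k)" for q
    by (simp add: Xhy_def E_def)
  have phase: "E k1 * cnj (E k2) = exp (\<i> * of_real (2 * pi * (real k1 - real k2) * f))"
    if "k1 \<ge> 1" "k2 \<ge> 1" for k1 k2
    using that unfolding E_def cis_conv_exp[symmetric]
    by (simp add: cis_cnj cis_mult of_nat_diff algebra_simps)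
  have "(\<Sum>p\<in>I. \<Sum>q\<in>I. cnj (Xhy n s y f p) * A p q * Xhy n s y f q)
      = (\<Sum>p\<in>I. \<Sum>q\<in>I. \<Sum>k1=1..n. \<Sum>k2=1..n. E k1 * s (snd p) k1 * cnj (y (fst p) k1) * A p q
            * (cnj (E k2) * cnj (s (snd q) k2) * y (fst q) k2))"
    unfolding cnj_X unfolding X sum_mult_sum ..
  also have "\<dots> = (\<Sum>k1=1..n. \<Sum>k2=1..n. \<Sum>p\<in>I. \<Sum>q\<in>I. E k1 * s (snd p) k1 * cnj (y (fst p) k1) * A p q
            * (cnj (E k2) * cnj (s (snd q) k2) * y (fst q) k2))"
    by (rule sum_swap_outer_pair)
  also have "\<dots> = (\<Sum>k1=1..n. \<Sum>k2=1..n. E k1 * cnj (E k2) * quad_coef I A s y k1 k2)"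
    by (simp add: quad_coef_def sum_distrib_left ac_simps)
  also have "\<dots> = (\<Sum>k1=1..n. \<Sum>k2=1..n.
         quad_coef I A s y k1 k2 * exp (\<i> * of_real (2 * pi * (real k1 - real k2) * f)))"
    using phase by (auto intro!: sum.cong simp: mult.commute)
  finally show ?thesis .
qed

lemma quad_coef_swap:
  assumes "hermitian_on I A"
  shows "quad_coef I A s y k2 k1 = cnj (quad_coef I A s y k1 k2)"
proof -
  have herm: "cnj (A p q) = A q p" if "p \<in> I" "q \<in> I" for p q
    using assms that unfolding hermitian_on_def by (metis complex_cnj_cnj)
  have "cnj (quad_coef I A s y k1 k2) = (\<Sum>q\<in>I. \<Sum>p\<in>I.
      cnj (A p q) * cnj (s (snd p) k1) * s (snd q) k2 * cnj (y (fst q) k2) * y (fst p) k1)"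
    unfolding quad_coef_def cnj_sum by (subst sum.swap) simp
  also have "\<dots> = quad_coef I A s y k2 k1"
    unfolding quad_coef_def by (auto intro!: sum.cong simp: herm ac_simps)
  finally show ?thesis by simp
qed

lemma objective_has_real_derivative:
  assumes "hermitian_on I A"
  shows "((\<lambda>f. 2 * Re (\<Sum>p\<in>I. cnj (b p) * Xhy n s y f p)
              + Re (\<Sum>p\<in>I. \<Sum>q\<in>I. cnj (Xhy n s y f p) * A p q * Xhy n s y f q))
    has_real_derivative
      - 4 * pi * Im (\<Sum>k=1..n-1. exp (\<i> * of_real (2 * pi * f * real k)) * of_nat k
          * (lin_coef I b s y (k + 1) + (\<Sum>a=k+1..n. quad_coef I A s y a (a - k))))) (at f)"
proof -
  define L where "L = lin_coef I b s y"
  define C where "C = quad_coef I A s y"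
  have herm: "C b a = cnj (C a b)" for a b
    unfolding C_def using assms by (rule quad_coef_swap)
  have "(\<lambda>f. 2 * Re (\<Sum>p\<in>I. cnj (b p) * Xhy n s y f p)
              + Re (\<Sum>p\<in>I. \<Sum>q\<in>I. cnj (Xhy n s y f p) * A p q * Xhy n s y f q))
      = (\<lambda>f. Re (\<Sum>k\<in>{1..n}. 2 * L k * exp (\<i> * of_real (2 * pi * real (k - 1) * f)))
           + Re (\<Sum>j\<in>{1..n} \<times> {1..n}. C (fst j) (snd j)
                   * exp (\<i> * of_real (2 * pi * (real (fst j) - real (snd j)) * f))))"
    unfolding linear_term_expansion quadratic_term_expansion sum.cartesian_product' L_def C_def
    by (simp add: sum_distrib_left mult.assoc)
  moreover have "((\<lambda>f. Re (\<Sum>k\<in>{1..n}. 2 * L k * exp (\<i> * of_real (2 * pi * real (k - 1) * f)))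
           + Re (\<Sum>j\<in>{1..n} \<times> {1..n}. C (fst j) (snd j)
                   * exp (\<i> * of_real (2 * pi * (real (fst j) - real (snd j)) * f))))
      has_real_derivative
        - (\<Sum>k\<in>{1..n}. 2 * pi * real (k - 1) * Im (2 * L k * exp (\<i> * of_real (2 * pi * real (k - 1) * f))))
        + - (\<Sum>j\<in>{1..n} \<times> {1..n}. 2 * pi * (real (fst j) - real (snd j))
             * Im (C (fst j) (snd j) * exp (\<i> * of_real (2 * pi * (real (fst j) - real (snd j)) * f))))) (at f)"
    by (intro DERIV_add has_real_derivative_Re_exp_sum)
  moreover have "(\<Sum>j\<in>{1..n} \<times> {1..n}. 2 * pi * (real (fst j) - real (snd j))
             * Im (C (fst j) (snd j) * exp (\<i> * of_real (2 * pi * (real (fst j) - real (snd j)) * f))))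
      = 4 * pi * (\<Sum>k=1..n-1. Im (exp (\<i> * of_real (2 * pi * f * real k)) * of_nat k * (\<Sum>a=k+1..n. C a (a - k))))"
    unfolding sum.cartesian_product' fst_conv snd_conv by (rule sum_difference_frequencies[OF herm])
  ultimately show ?thesis
    unfolding sum_linear_frequencies L_def C_def
    by (auto elim!: DERIV_cong simp: distrib_left Im_sum sum.distrib)
qed

lemma zcoef_eq:
  "zcoef lr lt n s Sig mu y k
    = lin_coef (chan_idx lr lt) (bvec lr lt n s Sig mu) s y (k + 1)
      + (\<Sum>a=k+1..n. quad_coef (chan_idx lr lt) (Amat lr lt n s Sig) s y a (a - k))"
  unfolding zcoef_def lin_coef_def quad_coef_def by (simp add: ac_simps)

lemma gfun_has_real_derivative:
  assumes "herm_pos_def (chan_idx lr lt) Sig"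
  shows "(gfun lr lt n s Sig mu muf sf2 y has_real_derivative
      - 4 * pi * Im (\<Sum>k=1..n-1. exp (\<i> * complex_of_real (2 * pi * f * real k))
                       * of_nat k * zcoef lr lt n s Sig mu y k)
      - (1 / sf2) * (f - muf)) (at f)"
proof -
  have "((\<lambda>f. 2 * Re (\<Sum>p\<in>chan_idx lr lt. cnj (bvec lr lt n s Sig mu p) * Xhy n s y f p)
          + Re (\<Sum>p\<in>chan_idx lr lt. \<Sum>q\<in>chan_idx lr lt.
                  cnj (Xhy n s y f p) * Amat lr lt n s Sig p q * Xhy n s y f q))
      has_real_derivative - 4 * pi * Im (\<Sum>k=1..n-1. exp (\<i> * complex_of_real (2 * pi * f * real k))
                       * of_nat k * zcoef lr lt n s Sig mu y k)) (at f)"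
    unfolding zcoef_eq by (rule objective_has_real_derivative[OF hermitian_on_Amat[OF assms]])
  moreover have "((\<lambda>f. 1/2 * (1 / sf2) * \<bar>f - muf\<bar>^2) has_real_derivative 1/2 * (1 / sf2) * (2 * (f - muf))) (at f)"
    unfolding power2_abs by (intro DERIV_cmult) (auto intro!: derivative_eq_intros)
  ultimately show ?thesis
    unfolding gfun_def[abs_def]
    by (rule DERIV_cong[OF DERIV_diff]) (cases "sf2 = 0"; simp add: field_simps)
qed

lemma Im_sum_exp_mult_polar:
  assumes "\<And>k. k \<in> {1..m} \<Longrightarrow> z k = of_real (r k) * exp (- \<i> * of_real (\<theta> k))"
  shows "Im (\<Sum>k=1..m. exp (\<i> * of_real (2 * pi * f * real k)) * of_nat k * z k)
    = (\<Sum>k=1..m. real k * r k * sin (2 * pi * real k * (f - \<theta> k / (2 * pi * real k))))"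
  unfolding Im_sum
proof (rule sum.cong[OF refl])
  fix k assume k: "k \<in> {1..m}"
  have "2 * pi * real k * (f - \<theta> k / (2 * pi * real k)) = 2 * pi * f * real k - \<theta> k"
    using k by (simp add: field_simps)
  then show "Im (exp (\<i> * of_real (2 * pi * f * real k)) * of_nat k * z k)
      = real k * r k * sin (2 * pi * real k * (f - \<theta> k / (2 * pi * real k)))"
    unfolding assms[OF k] cis_conv_exp[symmetric] by (simp add: Re_exp Im_exp sin_diff algebra_simps)
qed

lemma deriv_zero_at_global_max:
  assumes "(F has_real_derivative D) (at x)" and "\<forall>y. F y \<le> F x"
  shows "deriv F x = 0"
proof -
  have "D = 0"
    using assms(1) by (rule DERIV_local_max[where d = 1]) (use assms(2) in auto)
  with assms(1) show ?thesis
    by (simp add: DERIV_imp_deriv)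
qed

theorem theorem3:
  fixes lt lr n :: nat
    and s :: "nat \<Rightarrow> nat \<Rightarrow> complex"
    and Sig :: "nat \<times> nat \<Rightarrow> nat \<times> nat \<Rightarrow> complex"
    and mu :: "nat \<times> nat \<Rightarrow> complex"
    and muf sf2 :: real
    and y :: "nat \<Rightarrow> nat \<Rightarrow> complex"
  assumes "lt \<ge> 1" and "lr \<ge> 1" and "n \<ge> 1"
    and "herm_pos_def (chan_idx lr lt) Sig"
    and "sf2 > 0"
  shows "(\<forall>f::real.
           ((gfun lr lt n s Sig mu muf sf2 y) has_real_derivative
              (- 4 * pi * Im (\<Sum>k=1..n-1. exp (\<i> * complex_of_real (2 * pi * f * real k))
                                    * of_nat k * zcoef lr lt n s Sig mu y k)
               - (1 / sf2) * (f - muf))) (at f)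
         \<and> (\<forall>(rr::nat \<Rightarrow> real) (th::nat \<Rightarrow> real).
              (\<forall>k\<in>{1..n-1}. rr k \<ge> 0 \<and>
                  zcoef lr lt n s Sig mu y k = complex_of_real (rr k) * exp (- \<i> * complex_of_real (th k)))
              \<longrightarrow>
              - 4 * pi * Im (\<Sum>k=1..n-1. exp (\<i> * complex_of_real (2 * pi * f * real k))
                                    * of_nat k * zcoef lr lt n s Sig mu y k)
               - (1 / sf2) * (f - muf)
              = - 4 * pi * (\<Sum>k=1..n-1. real k * rr k * sin (2 * pi * real k * (f - th k / (2 * pi * real k))))
               - (1 / sf2) * (f - muf)))
       \<and> (\<forall>f0::real. (\<forall>f::real. gfun lr lt n s Sig mu muf sf2 y f \<le> gfun lr lt n s Sig mu muf sf2 y f0)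
           \<longrightarrow> deriv (gfun lr lt n s Sig mu muf sf2 y) f0 = 0)"
proof (intro conjI allI impI)
  show "(gfun lr lt n s Sig mu muf sf2 y has_real_derivative
          - 4 * pi * Im (\<Sum>k=1..n-1. exp (\<i> * complex_of_real (2 * pi * f * real k))
                           * of_nat k * zcoef lr lt n s Sig mu y k)
          - (1 / sf2) * (f - muf)) (at f)" for f
    using assms(4) by (rule gfun_has_real_derivative)
next
  fix f :: real and rr th :: "nat \<Rightarrow> real"
  assume "\<forall>k\<in>{1..n-1}. rr k \<ge> 0 \<and>
            zcoef lr lt n s Sig mu y k = complex_of_real (rr k) * exp (- \<i> * complex_of_real (th k))"
  then have "Im (\<Sum>k=1..n-1. exp (\<i> * complex_of_real (2 * pi * f * real k))
                * of_nat k * zcoef lr lt n s Sig mu y k)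
      = (\<Sum>k=1..n-1. real k * rr k * sin (2 * pi * real k * (f - th k / (2 * pi * real k))))"
    by (intro Im_sum_exp_mult_polar) blast
  then show "- 4 * pi * Im (\<Sum>k=1..n-1. exp (\<i> * complex_of_real (2 * pi * f * real k))
                               * of_nat k * zcoef lr lt n s Sig mu y k) - (1 / sf2) * (f - muf)
           = - 4 * pi * (\<Sum>k=1..n-1. real k * rr k * sin (2 * pi * real k * (f - th k / (2 * pi * real k))))
             - (1 / sf2) * (f - muf)"
    by simp
next
  fix f0 :: real
  assume "\<forall>f. gfun lr lt n s Sig mu muf sf2 y f \<le> gfun lr lt n s Sig mu muf sf2 y f0"
  with gfun_has_real_derivative[OF assms(4)] show "deriv (gfun lr lt n s Sig mu muf sf2 y) f0 = 0"
    by (rule deriv_zero_at_global_max)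
qed

end
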